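(* With $\beta=\frac1k-\frac\theta{2k}$, the lattices $\varphi_\beta(\mathcal{O}_\mathbb{L})$ (rotated $\mathbb{Z}^k$) and $\varphi_\beta(L')$ (rotated $D_k$) have maximum diversity, and $d_{p,\min}(\varphi_\beta(\mathcal{O}_\mathbb{L}))=2^{(1-(m-1)k)/2}$, $d_{p,\min}(\varphi_\beta(L'))=2^{(3-(m-1)k)/2}$.
   Context: Let $m\ge3$, $k=2^{m-2}$, $\omega=e^{2\pi i/2^m}$, $\theta_j=\omega^j+\omega^{-j}$, $\theta=\theta_1$, $\mathbb{L}=\mathbb{Q}(\theta)$ (totally real, degree $k$, $\mathcal{O}_\mathbb{L}=\mathbb{Z}[\theta]$). Let $L'$ be the $\mathbb{Z}$-module generated by $2+\theta_1,\theta_1,\theta_2,\dots,\theta_{k-1}$. Let $\tau$ be a generator of $\mathrm{Gal}(\mathbb{L}/\mathbb{Q})$; for totally positive $\beta\in\mathbb{L}$, $\varphi_\beta(y)=(\sqrt{\tau^j(\beta)}\tau^j(y))_{j=0}^{k-1}$. A lattice has maximum diversity if each nonzero vector has all coordinates nonzero; then $d_{p,\min}(\Lambda)=\inf\{|y_1\cdots y_k|:0\ne y\in\Lambda\}$. *)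

theory Defs
  imports Complex_Main
begin

definition kdim :: "nat \<Rightarrow> nat" where
  "kdim m = 2 ^ (m - 2)"

definition omega :: "nat \<Rightarrow> complex" where
  "omega m = cis (2 * pi / 2 ^ m)"

definition theta :: "nat \<Rightarrow> nat \<Rightarrow> real" where
  "theta m j = Re (omega m ^ j + inverse (omega m) ^ j)"

text \<open>Generator tau of Gal(L/Q): tau(omega + omega^-1) = omega^3 + omega^-3, so
  tau^j(theta_i) = theta_(i * 3^j).  An element of O_L = Z[theta] is given by integer
  coefficients c_0..c_(k-1) of 1, theta, ..., theta^(k-1); its j-th conjugate is:\<close>

definition conj_OL :: "nat \<Rightarrow> (nat \<Rightarrow> int) \<Rightarrow> nat \<Rightarrow> real" where
  "conj_OL m c j = (\<Sum>i<kdim m. of_int (c i) * theta m (3 ^ j) ^ i)"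

text \<open>An element of L' = Z-span of 2+theta_1, theta_1, ..., theta_(k-1) with coefficients
  c_0 (for 2+theta_1) and c_i (for theta_i, 1 <= i < k); its j-th conjugate is:\<close>

definition conj_L' :: "nat \<Rightarrow> (nat \<Rightarrow> int) \<Rightarrow> nat \<Rightarrow> real" where
  "conj_L' m c j = of_int (c 0) * (2 + theta m (3 ^ j))
     + (\<Sum>i\<in>{1..<kdim m}. of_int (c i) * theta m (i * 3 ^ j))"

definition conj_beta :: "nat \<Rightarrow> nat \<Rightarrow> real" where
  "conj_beta m j = 1 / real (kdim m) - theta m (3 ^ j) / (2 * real (kdim m))"

definition coeffs :: "nat \<Rightarrow> (nat \<Rightarrow> int) set" where
  "coeffs m = {c. \<forall>i\<ge>kdim m. c i = 0}"

text \<open>phi_beta applied to an element given by its conjugates; vectors in R^k are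
  functions nat => real vanishing at indices >= k.\<close>

definition phi_beta :: "nat \<Rightarrow> (nat \<Rightarrow> real) \<Rightarrow> (nat \<Rightarrow> real)" where
  "phi_beta m conjs = (\<lambda>j. if j < kdim m then sqrt (conj_beta m j) * conjs j else 0)"

definition lattice_OL :: "nat \<Rightarrow> (nat \<Rightarrow> real) set" where
  "lattice_OL m = (\<lambda>c. phi_beta m (conj_OL m c)) ` coeffs m"

definition lattice_L' :: "nat \<Rightarrow> (nat \<Rightarrow> real) set" where
  "lattice_L' m = (\<lambda>c. phi_beta m (conj_L' m c)) ` coeffs m"

definition max_diversity :: "nat \<Rightarrow> (nat \<Rightarrow> real) set \<Rightarrow> bool" where
  "max_diversity n \<Lambda> \<longleftrightarrow> (\<forall>y\<in>\<Lambda>. y \<noteq> (\<lambda>_. 0) \<longrightarrow> (\<forall>j<n. y j \<noteq> 0))"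

definition dpmin :: "nat \<Rightarrow> (nat \<Rightarrow> real) set \<Rightarrow> real" where
  "dpmin n \<Lambda> = Inf {\<bar>\<Prod>j<n. y j\<bar> | y. y \<in> \<Lambda> \<and> y \<noteq> (\<lambda>_. 0)}"

end

theory Submission
  imports Defs "HOL-Computational_Algebra.Polynomial_Factorial"
begin

text \<open>
  Write \<open>m = n + 2\<close>. The conjugates of \<open>theta\<close> are the \<open>2^n\<close> numbers \<open>2 cos(2 pi a / 2^(n+2))\<close>,
  \<open>a\<close> odd; by the half-angle formula they are the roots of \<open>psi\<^sub>0 = x\<close>,
  \<open>psi\<^sub>n\<^sub>+\<^sub>1 = psi\<^sub>n(x\<^sup>2 - 2)\<close>, which is Eisenstein at 2 and hence the minimal polynomial
  of \<open>theta\<close>. The generator \<open>tau\<close> maps \<open>theta\<^sub>a\<close> to \<open>theta\<^sub>3\<^sub>a\<close>, and since 3 has order \<open>2^n\<close>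
  modulo \<open>2^(n+2)\<close> and no power of 3 is \<open>-1\<close> modulo 8, \<open>j \<mapsto> tau\<^sup>j(theta)\<close> enumerates all
  conjugates. A nonzero element of \<open>O\<^sub>L\<close> or \<open>L'\<close> is an integer polynomial of degree \<open>< 2^n\<close> in
  \<open>theta\<close>, so none of its conjugates vanishes, and their product (its norm) is a nonzero integer;
  elements of \<open>L'\<close> are moreover multiples of \<open>theta\<close>, whose norm is \<open>\<plusminus>2\<close>. Finally \<open>phi\<^sub>beta\<close>
  scales the product of coordinates by \<open>sqrt N(beta)\<close>, where
  \<open>N(beta) = psi\<^sub>n(2) / 2^((n+1) 2^n) = 2^(1 - (n+1) 2^n)\<close>, and the bounds 1 and 2 are attained
  at \<open>1\<close> and \<open>theta\<close>.
\<close>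

section \<open>Integer polynomials\<close>

definition ipoly :: "int poly \<Rightarrow> 'a::comm_ring_1 \<Rightarrow> 'a" where
  "ipoly p x = poly (map_poly of_int p) x"

lemma ipoly_pCons [simp]: "ipoly (pCons a p) x = of_int a + x * ipoly p x"
  by (simp add: ipoly_def map_poly_pCons)

lemma ipoly_0 [simp]: "ipoly 0 x = 0"
  by (simp add: ipoly_def)

lemma ipoly_add [simp]: "ipoly (p + q) x = ipoly p x + ipoly q x"
  by (induction p q rule: poly_induct2) (simp_all add: algebra_simps)

lemma ipoly_minus [simp]: "ipoly (- p) x = - ipoly p x"
  by (induction p) auto

lemma ipoly_diff [simp]: "ipoly (p - q) x = ipoly p x - ipoly q x"
  using ipoly_add[of p "- q" x] by simp

lemma ipoly_smult [simp]: "ipoly (smult a p) x = of_int a * ipoly p x"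
  by (induction p) (auto simp: algebra_simps)

lemma ipoly_mult [simp]: "ipoly (p * q) x = ipoly p x * ipoly q x"
  by (induction p) (auto simp: algebra_simps)

lemma ipoly_monom [simp]: "ipoly (monom a i) x = of_int a * x ^ i"
  by (simp add: ipoly_def map_poly_monom poly_monom)

lemma ipoly_sum: "ipoly (\<Sum>i\<in>A. f i) x = (\<Sum>i\<in>A. ipoly (f i) x)"
  by (induction A rule: infinite_finite_induct) auto

lemma ipoly_pcompose [simp]: "ipoly (pcompose p q) x = ipoly p (ipoly q x)"
  by (induction p) (auto simp: pcompose_pCons)

lemma ipoly_at_0: "ipoly p 0 = of_int (coeff p 0)"
  by (simp add: ipoly_def poly_0_coeff_0 coeff_map_poly)

lemma ipoly_of_int: "ipoly p (of_int z) = of_int (poly p z)"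
  by (induction p) auto

lemma ipoly_even_odd_parts: "\<exists>A B. \<forall>x :: 'a :: comm_ring_1. ipoly p x = ipoly A (x\<^sup>2) + x * ipoly B (x\<^sup>2)"
proof (induction p)
  case 0
  show ?case by (intro exI[of _ 0]) auto
next
  case (pCons c p)
  from pCons.IH obtain A B where "\<forall>x :: 'a. ipoly p x = ipoly A (x\<^sup>2) + x * ipoly B (x\<^sup>2)"
    by blast
  then show ?case
    by (intro exI[of _ "pCons c B"] exI[of _ A]) (auto simp: algebra_simps power2_eq_square)
qed

lemma ipoly_mult_reflect_even: "\<exists>q. \<forall>x :: 'a :: comm_ring_1. ipoly p x * ipoly p (- x) = ipoly q (x\<^sup>2)"
proof -
  obtain A B where AB: "\<forall>x :: 'a. ipoly p x = ipoly A (x\<^sup>2) + x * ipoly B (x\<^sup>2)"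
    using ipoly_even_odd_parts by blast
  show ?thesis
  proof (intro exI allI)
    fix x :: 'a
    show "ipoly p x * ipoly p (- x) = ipoly (A * A - pCons 0 (B * B)) (x\<^sup>2)"
      by (simp add: AB power2_eq_square algebra_simps)
  qed
qed

lemma power_add_smult_2:
  fixes a b :: "'a::comm_ring_1 poly"
  shows "\<exists>c. (a + smult 2 b) ^ N = a ^ N + smult 2 c"
proof (induction N)
  case 0
  show ?case by (intro exI[of _ 0]) simp
next
  case (Suc N)
  then obtain c where c: "(a + smult 2 b) ^ N = a ^ N + smult 2 c"
    by blast
  show ?case
    by (intro exI[of _ "a * c + b * a ^ N + smult 2 (b * c)"]) (simp add: c algebra_simps smult_add_right)
qed

lemma pcompose_monom_1: "pcompose (monom 1 k) q = q ^ k"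
  by (induction k) (simp_all add: monom_altdef pcompose_mult pcompose_pCons)

lemma ipoly_nonzero_if_below_prime_degree:
  fixes p S :: "int poly" and r :: "'a::{comm_ring_1,ring_char_0}"
  assumes p: "prime_elem p" and root: "ipoly p r = 0"
  shows "S \<noteq> 0 \<Longrightarrow> degree S < degree p \<Longrightarrow> ipoly S r \<noteq> 0"
\<comment> \<open>pseudo-dividing \<open>p\<close> by a root \<open>S\<close> of least degree leaves a root of smaller degree, so
  \<open>p\<close> divides \<open>S * q\<close> with both factors of degree less than \<open>degree p\<close>\<close>
proof (induction "degree S" arbitrary: S rule: less_induct)
  case less
  show ?case
  proof
    assume S_root: "ipoly S r = 0"
    show False
    proof (cases "degree S = 0")
      case True
      then obtain c where "S = [:c:]" "c \<noteq> 0"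
        using less.prems(1) by (metis degree_eq_zeroE pCons_eq_0_iff)
      with S_root show False by simp
    next
      case False
      obtain q s where qs: "pseudo_divmod p S = (q, s)"
        by (cases "pseudo_divmod p S") auto
      define c where "c = lead_coeff S ^ (Suc (degree p) - degree S)"
      have c: "c \<noteq> 0"
        unfolding c_def using less.prems(1) by simp
      have eq: "smult c p = S * q + s" and s_deg: "s = 0 \<or> degree s < degree S"
        using pseudo_divmod[OF less.prems(1) qs] unfolding c_def by auto
      have "ipoly s r = 0"
        using arg_cong[OF eq, of "\<lambda>f. ipoly f r"] root S_root by simp
      then have "s = 0"
        using less.hyps[of s] s_deg less.prems(2) by fastforce
      with eq have eq': "smult c p = S * q" by simp
      have "p \<noteq> 0" using p by auto
      then have q: "q \<noteq> 0" using eq' c by auto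
      have "p dvd S * q"
        using eq' by (metis dvd_smult dvd_refl)
      then have "p dvd S \<or> p dvd q"
        using p by (simp add: prime_elem_dvd_mult_iff)
      moreover have "degree p = degree S + degree q"
        using arg_cong[OF eq', of degree] c less.prems(1) q by (simp add: degree_mult_eq)
      ultimately show False
        using dvd_imp_degree_le[of p S] dvd_imp_degree_le[of p q] less.prems q False by auto
    qed
  qed
qed

lemma monic_eisenstein_aux:
  fixes p a b :: "int poly" and q :: int
  assumes q: "prime q" and lead: "lead_coeff p = 1"
    and low: "\<And>i. i < degree p \<Longrightarrow> q dvd coeff p i"
    and p: "p = a * b" and deg_a: "degree a \<ge> 1" and deg_b: "degree b \<ge> 1"
    and b0: "\<not> q dvd coeff b 0"
  shows False
proof -
  have "a \<noteq> 0" "b \<noteq> 0"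
    using deg_a deg_b by auto
  then have deg: "degree p = degree a + degree b"
    using p by (simp add: degree_mult_eq)
  have "lead_coeff a * lead_coeff b = 1"
    using lead p by (simp add: lead_coeff_mult)
  then have "\<not> q dvd lead_coeff a"
    using q by (metis dvd_mult2 not_prime_unit)
  define s where "s = (LEAST i. \<not> q dvd coeff a i)"
  have s: "\<not> q dvd coeff a s"
    unfolding s_def by (rule LeastI[of _ "degree a"]) fact
  have below_s: "q dvd coeff a i" if "i < s" for i
    using that not_less_Least unfolding s_def by blast
  have "s \<le> degree a"
    unfolding s_def by (rule Least_le) fact
  then have "q dvd coeff p s"
    using low deg deg_b by simp
  moreover have "coeff p s = (\<Sum>i<s. coeff a i * coeff b (s - i)) + coeff a s * coeff b 0"
    unfolding p coeff_mult by (simp add: lessThan_Suc_atMost[symmetric])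
  moreover have "q dvd (\<Sum>i<s. coeff a i * coeff b (s - i))"
    by (rule dvd_sum) (use below_s in auto)
  ultimately have "q dvd coeff a s * coeff b 0"
    by (simp add: dvd_add_right_iff)
  with s b0 q show False
    by (simp add: prime_dvd_mult_iff)
qed

lemma monic_eisenstein_irreducible:
  fixes p :: "int poly" and q :: int
  assumes q: "prime q" and lead: "lead_coeff p = 1" and deg: "degree p \<ge> 1"
    and low: "\<And>i. i < degree p \<Longrightarrow> q dvd coeff p i" and p0: "\<not> q\<^sup>2 dvd coeff p 0"
  shows "irreducible p"
proof (rule irreducibleI)
  show "p \<noteq> 0" using deg by auto
  show "\<not> is_unit p" using deg by (auto simp: is_unit_poly_iff)
  fix a b assume ab: "p = a * b"
  have lead_ab: "lead_coeff a * lead_coeff b = 1"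
    using lead ab by (simp add: lead_coeff_mult)
  show "is_unit a \<or> is_unit b"
  proof (cases "degree a = 0 \<or> degree b = 0")
    case True
    then show ?thesis
    proof
      assume "degree a = 0"
      moreover have "is_unit (lead_coeff a)"
        using lead_ab by (metis dvd_triv_left)
      ultimately show ?thesis
        by (auto simp: is_unit_poly_iff elim: degree_eq_zeroE)
    next
      assume "degree b = 0"
      moreover have "is_unit (lead_coeff b)"
        using lead_ab by (metis dvd_triv_right)
      ultimately show ?thesis
        by (auto simp: is_unit_poly_iff elim: degree_eq_zeroE)
    qed
  next
    case False
    have "coeff a 0 * coeff b 0 = coeff p 0"
      using ab by (simp add: coeff_mult)
    with p0 have "\<not> q dvd coeff a 0 \<or> \<not> q dvd coeff b 0"
      using mult_dvd_mono[of q "coeff a 0" q "coeff b 0"] by (auto simp: power2_eq_square)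
    moreover have "degree a \<ge> 1" "degree b \<ge> 1"
      using False by auto
    moreover have "p = b * a"
      using ab by (simp add: mult.commute)
    ultimately have False
      using monic_eisenstein_aux[of q p, OF q lead low] ab by blast
    then show ?thesis ..
  qed
qed

section \<open>The conjugates of \<open>theta\<close>\<close>

definition two_cos :: "nat \<Rightarrow> nat \<Rightarrow> real" where
  "two_cos n a = 2 * cos (2 * pi * real a / 2 ^ (n + 2))"

lemma theta_eq_two_cos: "theta (n + 2) a = two_cos n a"
proof -
  have "omega (n + 2) ^ a = cis (real a * (2 * pi / 2 ^ (n + 2)))"
    "inverse (omega (n + 2)) ^ a = cis (- (real a * (2 * pi / 2 ^ (n + 2))))"
    unfolding omega_def by (simp_all add: DeMoivre)
  then show ?thesis
    unfolding theta_def two_cos_def by (simp add: algebra_simps)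
qed

lemma two_cos_Suc_square: "(two_cos (Suc n) a)\<^sup>2 - 2 = two_cos n a"
proof -
  define x where "x = 2 * pi * real a / 2 ^ (n + 3)"
  have "two_cos (Suc n) a = 2 * cos x"
    unfolding two_cos_def x_def by (simp add: numeral_3_eq_3)
  moreover have "two_cos n a = 2 * cos (2 * x)"
    unfolding two_cos_def x_def by (simp add: numeral_3_eq_3 field_simps)
  ultimately show ?thesis
    by (simp only: cos_double_cos) (simp add: power2_eq_square)
qed

lemma two_cos_add_half_period: "two_cos n (a + 2 ^ (n + 1)) = - two_cos n a"
proof -
  have "2 * pi * real (a + 2 ^ (n + 1)) / 2 ^ (n + 2) = 2 * pi * real a / 2 ^ (n + 2) + pi"
    by (simp add: field_simps power_add)
  then show ?thesis
    unfolding two_cos_def by (simp add: cos_add)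
qed

lemma abs_two_cos_le: "\<bar>two_cos n a\<bar> \<le> 2"
  unfolding two_cos_def by (simp add: abs_mult)

lemma two_cos_Suc_odd_nonzero:
  assumes "odd a"
  shows "two_cos (Suc n) a \<noteq> 0"
proof
  assume "two_cos (Suc n) a = 0"
  then have "cos (2 * pi * real a / 2 ^ (n + 3)) = 0"
    unfolding two_cos_def by (simp add: numeral_3_eq_3)
  then obtain i where "2 * pi * real a / 2 ^ (n + 3) = of_int i * (pi / 2)"
    using cos_zero_iff_int by blast
  then have "real_of_int (int a * 4) = real_of_int (i * 2 ^ (n + 3))"
    by (simp add: field_simps)
  then have "int a = 2 * (i * 2 ^ n)"
    unfolding of_int_eq_iff by (simp add: power_add)
  with assms show False
    by presburger
qed

definition theta_conjs :: "nat \<Rightarrow> real set" where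
  "theta_conjs n = two_cos n ` {a. odd a}"

lemma two_cos_mem_theta_conjs: "odd a \<Longrightarrow> two_cos n a \<in> theta_conjs n"
  unfolding theta_conjs_def by blast

lemma theta_conjs_0: "theta_conjs 0 = {0}"
proof -
  have "two_cos 0 a = 0" if "odd a" for a
  proof -
    have "cos (of_int (int a) * (pi / 2)) = 0"
      using that by (subst cos_zero_iff_int) (auto intro!: exI[of _ "int a"])
    then show ?thesis
      unfolding two_cos_def by (simp add: ac_simps)
  qed
  then show ?thesis
    unfolding theta_conjs_def by (auto intro!: image_eqI[of _ _ 1])
qed

lemma uminus_mem_theta_conjs:
  assumes "r \<in> theta_conjs n"
  shows "- r \<in> theta_conjs n"
proof -
  obtain a where "odd a" "r = two_cos n a"
    using assms unfolding theta_conjs_def by blast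
  then have "odd (a + 2 ^ (n + 1))" "- r = two_cos n (a + 2 ^ (n + 1))"
    using two_cos_add_half_period[of n a] by simp_all
  then show ?thesis
    by (simp add: two_cos_mem_theta_conjs)
qed

lemma zero_notin_theta_conjs_Suc: "0 \<notin> theta_conjs (Suc n)"
  unfolding theta_conjs_def using two_cos_Suc_odd_nonzero by auto

lemma theta_conjs_ge_minus2:
  assumes "r \<in> theta_conjs n"
  shows "r \<ge> -2"
proof -
  obtain a where "r = two_cos n a"
    using assms unfolding theta_conjs_def by blast
  then show ?thesis
    using abs_two_cos_le[of n a] by linarith
qed

text \<open>Half-angle formula: \<open>2 cos(x/2) = \<plusminus>sqrt(2 cos x + 2)\<close>.\<close>

definition half_angle :: "real \<Rightarrow> real" where
  "half_angle r = sqrt (r + 2)"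

lemma half_angle_square: "r \<in> theta_conjs n \<Longrightarrow> (half_angle r)\<^sup>2 = r + 2"
  unfolding half_angle_def using theta_conjs_ge_minus2[of r n] by simp

lemma half_angle_mem_theta_conjs:
  assumes "r \<in> theta_conjs n"
  shows "half_angle r \<in> theta_conjs (Suc n)"
proof -
  obtain a where a: "odd a" "r = two_cos n a"
    using assms unfolding theta_conjs_def by auto
  have "half_angle r = \<bar>two_cos (Suc n) a\<bar>"
    unfolding half_angle_def a(2) two_cos_Suc_square[of n a, symmetric] by simp
  then show ?thesis
    using a(1) by (cases "two_cos (Suc n) a \<ge> 0") (simp_all add: two_cos_mem_theta_conjs uminus_mem_theta_conjs)
qed

lemma theta_conjs_Suc:
  "theta_conjs (Suc n) = half_angle ` theta_conjs n \<union> (\<lambda>r. - half_angle r) ` theta_conjs n"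
proof
  show "half_angle ` theta_conjs n \<union> (\<lambda>r. - half_angle r) ` theta_conjs n \<subseteq> theta_conjs (Suc n)"
    by (simp add: image_subset_iff half_angle_mem_theta_conjs uminus_mem_theta_conjs)
next
  show "theta_conjs (Suc n) \<subseteq> half_angle ` theta_conjs n \<union> (\<lambda>r. - half_angle r) ` theta_conjs n"
  proof
    fix s assume "s \<in> theta_conjs (Suc n)"
    then have r: "s\<^sup>2 - 2 \<in> theta_conjs n"
      unfolding theta_conjs_def using two_cos_Suc_square by auto
    have "s = half_angle (s\<^sup>2 - 2) \<or> s = - half_angle (s\<^sup>2 - 2)"
      unfolding half_angle_def by (auto simp: abs_if)
    then show "s \<in> half_angle ` theta_conjs n \<union> (\<lambda>r. - half_angle r) ` theta_conjs n"
    proof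
      assume "s = half_angle (s\<^sup>2 - 2)"
      with r show ?thesis by (intro UnI1 image_eqI)
    next
      assume "s = - half_angle (s\<^sup>2 - 2)"
      with r show ?thesis by (intro UnI2 image_eqI)
    qed
  qed
qed

lemma inj_half_angle: "inj_on half_angle (theta_conjs n)"
  and inj_uminus_half_angle: "inj_on (\<lambda>r. - half_angle r) (theta_conjs n)"
  unfolding half_angle_def inj_on_def by simp_all

lemma half_angle_images_disjoint:
  "half_angle ` theta_conjs n \<inter> (\<lambda>r. - half_angle r) ` theta_conjs n = {}"
proof -
  have "half_angle r \<noteq> - half_angle r'" if "r \<in> theta_conjs n" "r' \<in> theta_conjs n" for r r'
  proof
    assume "half_angle r = - half_angle r'"
    moreover have "half_angle r \<ge> 0" "half_angle r' \<ge> 0"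
      unfolding half_angle_def
      using theta_conjs_ge_minus2[OF that(1)] theta_conjs_ge_minus2[OF that(2)] by simp_all
    ultimately have "half_angle r = 0" by linarith
    with half_angle_mem_theta_conjs[OF that(1)] zero_notin_theta_conjs_Suc show False
      by simp
  qed
  then show ?thesis
    by (auto simp: disjoint_iff)
qed

lemma finite_theta_conjs: "finite (theta_conjs n)"
  by (induction n) (auto simp: theta_conjs_0 theta_conjs_Suc)

lemma card_theta_conjs: "card (theta_conjs n) = 2 ^ n"
proof (induction n)
  case 0
  show ?case by (simp add: theta_conjs_0)
next
  case (Suc n)
  have "card (theta_conjs (Suc n))
      = card (half_angle ` theta_conjs n) + card ((\<lambda>r. - half_angle r) ` theta_conjs n)"
    unfolding theta_conjs_Suc
    by (intro card_Un_disjoint finite_imageI finite_theta_conjs half_angle_images_disjoint)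
  also have "\<dots> = 2 ^ Suc n"
    by (simp only: card_image[OF inj_half_angle] card_image[OF inj_uminus_half_angle] Suc.IH)
       simp
  finally show ?case .
qed

lemma prod_theta_conjs_Suc:
  "(\<Prod>s\<in>theta_conjs (Suc n). f s) = (\<Prod>r\<in>theta_conjs n. f (half_angle r) * f (- half_angle r))"
proof -
  have "(\<Prod>s\<in>theta_conjs (Suc n). f s)
      = (\<Prod>s\<in>half_angle ` theta_conjs n. f s) * (\<Prod>s\<in>(\<lambda>r. - half_angle r) ` theta_conjs n. f s)"
    unfolding theta_conjs_Suc
    by (intro prod.union_disjoint finite_imageI finite_theta_conjs half_angle_images_disjoint)
  also have "\<dots> = (\<Prod>r\<in>theta_conjs n. f (half_angle r)) * (\<Prod>r\<in>theta_conjs n. f (- half_angle r))"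
    by (simp only: prod.reindex[OF inj_half_angle] prod.reindex[OF inj_uminus_half_angle] comp_def)
  finally show ?thesis
    unfolding prod.distrib .
qed

section \<open>Minimal polynomial and norm\<close>

fun theta_minpoly :: "nat \<Rightarrow> int poly" where
  "theta_minpoly 0 = [:0, 1:]"
| "theta_minpoly (Suc n) = pcompose (theta_minpoly n) [:-2, 0, 1:]"

lemma ipoly_theta_minpoly: "ipoly (theta_minpoly n) x = (\<Prod>r\<in>theta_conjs n. x - r)"
proof (induction n arbitrary: x)
  case 0
  show ?case by (simp add: theta_conjs_0)
next
  case (Suc n)
  have "ipoly (theta_minpoly (Suc n)) x = (\<Prod>r\<in>theta_conjs n. x\<^sup>2 - 2 - r)"
    using Suc.IH[of "x\<^sup>2 - 2"] by (simp add: power2_eq_square)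
  also have "\<dots> = (\<Prod>r\<in>theta_conjs n. (x - half_angle r) * (x - - half_angle r))"
    by (rule prod.cong) (simp_all add: half_angle_square algebra_simps flip: power2_eq_square)
  also have "\<dots> = (\<Prod>s\<in>theta_conjs (Suc n). x - s)"
    by (rule prod_theta_conjs_Suc[symmetric])
  finally show ?case .
qed

lemma theta_minpoly_root: "r \<in> theta_conjs n \<Longrightarrow> ipoly (theta_minpoly n) r = 0"
  unfolding ipoly_theta_minpoly using finite_theta_conjs by (auto intro: prod_zero)

lemma poly_theta_minpoly_2: "poly (theta_minpoly n) 2 = 2"
  by (induction n) (auto simp: poly_pcompose)

lemma abs_coeff_theta_minpoly_Suc_0: "\<bar>coeff (theta_minpoly (Suc n)) 0\<bar> = 2"
proof -
  have "coeff (theta_minpoly (Suc n)) 0 = poly (theta_minpoly n) (-2)"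
    by (simp add: poly_0_coeff_0[symmetric] poly_pcompose)
  also have "\<dots> = (if n = 0 then -2 else 2)"
    by (cases n) (simp_all add: poly_pcompose poly_theta_minpoly_2)
  finally show ?thesis
    by simp
qed

lemma degree_theta_minpoly: "degree (theta_minpoly n) = 2 ^ n"
  by (induction n) (auto simp: degree_pcompose)

lemma lead_coeff_theta_minpoly: "lead_coeff (theta_minpoly n) = 1"
proof (induction n)
  case (Suc n)
  then show ?case
    using lead_coeff_comp[of "[:-2, 0, 1::int:]" "theta_minpoly n"] by simp
qed simp

lemma theta_minpoly_mod_2: "\<exists>E. theta_minpoly n = monom 1 (2 ^ n) + smult 2 E"
proof (induction n)
  case 0
  show ?case by (intro exI[of _ 0]) (simp add: monom_altdef)
next
  case (Suc n)
  then obtain E where E: "theta_minpoly n = monom 1 (2 ^ n) + smult 2 E"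
    by blast
  have "[:-2, 0, 1::int:] = monom 1 2 + smult 2 [:-1:]"
    by (simp add: monom_altdef power2_eq_square)
  then obtain F where F: "[:-2, 0, 1::int:] ^ 2 ^ n = monom 1 (2 ^ Suc n) + smult 2 F"
    using power_add_smult_2[of "monom 1 2" "[:-1:]" "2 ^ n"] by (auto simp: monom_power)
  show ?case
    by (intro exI[of _ "F + pcompose E [:-2, 0, 1:]"])
       (simp add: E F pcompose_add pcompose_smult pcompose_monom_1 smult_add_right)
qed

lemma irreducible_theta_minpoly:
  assumes "n \<ge> 1"
  shows "irreducible (theta_minpoly n)"
proof -
  obtain n' where n: "n = Suc n'"
    using assms by (cases n) auto
  obtain E where E: "theta_minpoly n = monom 1 (2 ^ n) + smult 2 E"
    using theta_minpoly_mod_2 by blast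
  show ?thesis
  proof (rule monic_eisenstein_irreducible[where q = 2])
    show "prime (2 :: int)" by simp
    show "lead_coeff (theta_minpoly n) = 1" by (rule lead_coeff_theta_minpoly)
    show "degree (theta_minpoly n) \<ge> 1" by (simp add: degree_theta_minpoly)
    show "2 dvd coeff (theta_minpoly n) i" if "i < degree (theta_minpoly n)" for i
    proof -
      have "i < 2 ^ n"
        using that by (simp add: degree_theta_minpoly)
      then show ?thesis
        by (simp add: E)
    qed
    have "\<not> 2\<^sup>2 dvd c" if "\<bar>c\<bar> = 2" for c :: int
    proof -
      have "c = 2 \<or> c = -2"
        using that by arith
      then show ?thesis
        by auto
    qed
    then show "\<not> 2\<^sup>2 dvd coeff (theta_minpoly n) 0"
      unfolding n using abs_coeff_theta_minpoly_Suc_0 by blast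
  qed
qed

lemma ipoly_nonzero_at_theta_conj:
  assumes "n \<ge> 1" "r \<in> theta_conjs n" "S \<noteq> 0" "degree S < 2 ^ n"
  shows "ipoly S r \<noteq> 0"
  using assms irreducible_theta_minpoly[OF assms(1)] theta_minpoly_root[OF assms(2)]
  by (intro ipoly_nonzero_if_below_prime_degree[of "theta_minpoly n"])
     (simp_all add: irreducible_imp_prime_elem degree_theta_minpoly)

definition theta_norm :: "nat \<Rightarrow> int poly \<Rightarrow> real" where
  "theta_norm n S = (\<Prod>r\<in>theta_conjs n. ipoly S r)"

lemma theta_norm_in_Ints: "theta_norm n S \<in> \<int>"
proof (induction n arbitrary: S)
  case 0
  show ?case by (simp add: theta_norm_def theta_conjs_0 ipoly_at_0)
next
  case (Suc n)
  obtain V where V: "\<forall>x :: real. ipoly S x * ipoly S (- x) = ipoly V (x\<^sup>2)"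
    using ipoly_mult_reflect_even by blast
  have "theta_norm (Suc n) S = (\<Prod>r\<in>theta_conjs n. ipoly S (half_angle r) * ipoly S (- half_angle r))"
    unfolding theta_norm_def by (rule prod_theta_conjs_Suc)
  also have "\<dots> = theta_norm n (pcompose V [:2, 1:])"
    unfolding theta_norm_def by (rule prod.cong) (simp_all add: V half_angle_square add.commute)
  finally show ?case
    using Suc.IH by simp
qed

lemma theta_norm_nonzero: "n \<ge> 1 \<Longrightarrow> S \<noteq> 0 \<Longrightarrow> degree S < 2 ^ n \<Longrightarrow> theta_norm n S \<noteq> 0"
  unfolding theta_norm_def using finite_theta_conjs ipoly_nonzero_at_theta_conj by auto

lemma abs_theta_norm_ge_1:
  "n \<ge> 1 \<Longrightarrow> S \<noteq> 0 \<Longrightarrow> degree S < 2 ^ n \<Longrightarrow> \<bar>theta_norm n S\<bar> \<ge> 1"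
  using Ints_nonzero_abs_ge1[OF theta_norm_in_Ints theta_norm_nonzero] .

lemma abs_prod_theta_conjs:
  assumes "n \<ge> 1"
  shows "\<bar>\<Prod>r\<in>theta_conjs n. r\<bar> = 2"
proof -
  obtain n' where n: "n = Suc n'"
    using assms by (cases n) auto
  have "ipoly (theta_minpoly n) (0 :: real) = (\<Prod>r\<in>theta_conjs n. (-1) * r)"
    unfolding ipoly_theta_minpoly by simp
  also have "\<dots> = (-1) ^ card (theta_conjs n) * (\<Prod>r\<in>theta_conjs n. r)"
    unfolding prod.distrib prod_constant ..
  finally have "\<bar>\<Prod>r\<in>theta_conjs n. r\<bar> = \<bar>ipoly (theta_minpoly n) (0 :: real)\<bar>"
    by (simp add: abs_mult)
  also have "\<dots> = 2"
    using abs_coeff_theta_minpoly_Suc_0[of n'] unfolding n ipoly_at_0 by simp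
  finally show ?thesis .
qed

text \<open>A polynomial with even constant term lies in the ideal generated by \<open>theta\<close>, whose norm is 2.\<close>

lemma abs_theta_norm_ge_2:
  assumes n: "n \<ge> 1" and R: "R \<noteq> 0" "degree R < 2 ^ n" and even: "even (coeff R 0)"
  shows "\<bar>theta_norm n R\<bar> \<ge> 2"
proof -
  obtain n' where n': "n = Suc n'"
    using n by (cases n) auto
  have "\<bar>coeff (theta_minpoly n) 0\<bar> dvd coeff R 0"
    using abs_coeff_theta_minpoly_Suc_0[of n'] even unfolding n' by simp
  then have "coeff (theta_minpoly n) 0 dvd coeff R 0"
    by simp
  then obtain b where b: "coeff R 0 = coeff (theta_minpoly n) 0 * b"
    by blast
  obtain c S where cS: "R - smult b (theta_minpoly n) = pCons c S"
    by (cases "R - smult b (theta_minpoly n)")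
  have "c = 0"
    using arg_cong[OF cS, of "\<lambda>p. coeff p 0"] b by simp
  have factor: "ipoly R r = r * ipoly S r" if "r \<in> theta_conjs n" for r
    using arg_cong[OF cS, of "\<lambda>p. ipoly p r"] theta_minpoly_root[OF that] \<open>c = 0\<close> by simp
  have "theta_norm n R = (\<Prod>r\<in>theta_conjs n. r) * theta_norm n S"
    unfolding theta_norm_def prod.distrib[symmetric] by (rule prod.cong) (simp_all add: factor)
  moreover have "theta_norm n R \<noteq> 0"
    using theta_norm_nonzero[OF n R] .
  ultimately have "\<bar>theta_norm n S\<bar> \<ge> 1"
    using Ints_nonzero_abs_ge1[OF theta_norm_in_Ints] by force
  then show ?thesis
    using \<open>theta_norm n R = _\<close> abs_prod_theta_conjs[OF n] by (simp add: abs_mult)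
qed

section \<open>The Galois action\<close>

lemma two_cos_eq_imp_dvd:
  assumes "two_cos n a = two_cos n b"
  shows "(2::int) ^ (n + 2) dvd int a + int b \<or> (2::int) ^ (n + 2) dvd int b - int a"
proof -
  define N :: real where "N = 2 ^ (n + 2)"
  define x where "x = 2 * pi * real a / N"
  define y where "y = 2 * pi * real b / N"
  have N: "N > 0" unfolding N_def by simp
  have "cos x = cos y"
    using assms unfolding two_cos_def x_def y_def N_def by simp
  then have "sin ((x + y) / 2) = 0 \<or> sin ((y - x) / 2) = 0"
    using cos_diff_cos[of x y] by simp
  then show ?thesis
  proof
    assume "sin ((x + y) / 2) = 0"
    then obtain z :: int where "(x + y) / 2 = of_int z * pi"
      using sin_zero_iff_int2 by blast
    then have "pi * (real a + real b) = pi * (of_int z * N)"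
      using N unfolding x_def y_def by (simp add: field_simps)
    then have "real_of_int (int a + int b) = real_of_int (z * 2 ^ (n + 2))"
      unfolding N_def by simp
    then show ?thesis
      unfolding of_int_eq_iff by simp
  next
    assume "sin ((y - x) / 2) = 0"
    then obtain z :: int where "(y - x) / 2 = of_int z * pi"
      using sin_zero_iff_int2 by blast
    then have "pi * (real b - real a) = pi * (of_int z * N)"
      using N unfolding x_def y_def by (simp add: field_simps)
    then have "real_of_int (int b - int a) = real_of_int (z * 2 ^ (n + 2))"
      unfolding N_def by simp
    then show ?thesis
      unfolding of_int_eq_iff by simp
  qed
qed

lemma three_pow_mod_8: "(3::int) ^ d mod 8 = (if even d then 1 else 3)"
proof (induction d)
  case (Suc d)
  have "(3::int) ^ Suc d mod 8 = (3 * (3 ^ d mod 8)) mod 8"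
    by (simp add: mod_mult_right_eq)
  with Suc show ?case
    by auto
qed simp

lemma three_pow_two_pow:
  assumes "e \<ge> 1"
  shows "\<exists>u. odd u \<and> (3::int) ^ 2 ^ e = 1 + 2 ^ (e + 2) * u"
  using assms
proof (induction e rule: dec_induct)
  case base
  show ?case by (intro exI[of _ 1]) simp
next
  case (step e)
  then obtain u where u: "odd u" "(3::int) ^ 2 ^ e = 1 + 2 ^ (e + 2) * u"
    by blast
  have "(3::int) ^ 2 ^ Suc e = (3 ^ 2 ^ e)\<^sup>2"
    by (simp add: power_mult[symmetric] mult.commute)
  also have "\<dots> = 1 + 2 ^ (Suc e + 2) * (u + 2 ^ (e + 1) * u\<^sup>2)"
    by (simp add: u power2_eq_square algebra_simps power_add)
  finally show ?case
    using u(1) by (intro exI[of _ "u + 2 ^ (e + 1) * u\<^sup>2"]) simp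
qed

lemma dvd_one_plus_power_minus_linear:
  fixes M X :: int
  assumes "M dvd X\<^sup>2"
  shows "M dvd (1 + X) ^ t - 1 - int t * X"
proof (induction t)
  case (Suc t)
  have "(1 + X) ^ Suc t - 1 - int (Suc t) * X = (1 + X) * ((1 + X) ^ t - 1 - int t * X) + int t * X\<^sup>2"
    by (simp add: algebra_simps power2_eq_square)
  then show ?case
    using Suc assms by simp
qed simp

lemma not_dvd_three_pow_minus_1:
  assumes t: "odd t"
  shows "\<not> (2::int) ^ (e + 3) dvd 3 ^ (2 ^ e * t) - 1"
proof
  assume dvd: "(2::int) ^ (e + 3) dvd 3 ^ (2 ^ e * t) - 1"
  show False
  proof (cases "e = 0")
    case True
    then have "(8::int) dvd 3 ^ t - 1"
      using dvd by simp
    then have "(3::int) ^ t mod 8 = 1"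
      using mod_eq_dvd_iff[of "3 ^ t" 8 "1::int"] by simp
    with t show False
      by (simp add: three_pow_mod_8)
  next
    case False
    then obtain u where u: "odd u" "(3::int) ^ 2 ^ e = 1 + 2 ^ (e + 2) * u"
      using three_pow_two_pow[of e] by auto
    define X where "X = (2::int) ^ (e + 2) * u"
    have "X\<^sup>2 = 2 ^ (e + 3) * (2 ^ (e + 1) * u\<^sup>2)"
      unfolding X_def by (simp add: power2_eq_square power_add algebra_simps)
    then have "(2::int) ^ (e + 3) dvd (1 + X) ^ t - 1 - int t * X"
      by (intro dvd_one_plus_power_minus_linear) simp
    moreover have "(1 + X) ^ t = (3::int) ^ (2 ^ e * t)"
      unfolding X_def by (simp add: power_mult u(2))
    ultimately have "(2::int) ^ (e + 3) dvd 3 ^ (2 ^ e * t) - 1 - int t * X"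
      by simp
    from dvd_diff[OF dvd this] have "(2::int) ^ (e + 3) dvd int t * X"
      by simp
    then have "(2::int) ^ (e + 2) * 2 dvd 2 ^ (e + 2) * (int t * u)"
      unfolding X_def by (simp add: power_add algebra_simps)
    then have "2 dvd int t * u"
      by (subst (asm) dvd_mult_cancel_left) simp
    with t u(1) show False
      by simp
  qed
qed

lemma two_pow_dvd_three_pow_minus_1_imp_dvd:
  "(2::int) ^ (n + 2) dvd 3 ^ d - 1 \<Longrightarrow> 2 ^ n dvd d"
proof (induction n)
  case (Suc n)
  have "(2::int) ^ (n + 2) dvd 3 ^ d - 1"
    using Suc.prems by (rule dvd_trans[rotated]) (simp add: le_imp_power_dvd)
  then obtain t where d: "d = 2 ^ n * t"
    using Suc.IH by blast
  have "(2::int) ^ (n + 3) dvd 3 ^ (2 ^ n * t) - 1"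
    using Suc.prems unfolding d by (simp add: power_add mult.commute)
  then have "even t"
    using not_dvd_three_pow_minus_1[of t n] by blast
  then show ?case
    using d by auto
qed simp

lemma two_cos_pow3_neq:
  assumes n: "n \<ge> 1" and ij: "i < j" "j < 2 ^ n"
  shows "two_cos n (3 ^ i) \<noteq> two_cos n (3 ^ j)"
proof
  assume eq: "two_cos n (3 ^ i) = two_cos n (3 ^ j)"
  define d where "d = j - i"
  have d: "0 < d" "d < 2 ^ n" "j = i + d"
    using ij unfolding d_def by auto
  have "coprime (2::int) 3"
    by (rule coprimeI) (use dvd_diff[of _ 3 2] in force)
  then have "coprime ((2::int) ^ (n + 2)) (3 ^ i)"
    by (simp only: coprime_power_left_iff coprime_power_right_iff) simp
  moreover have "int (3 ^ i) + int (3 ^ j) = 3 ^ i * (3 ^ d + 1)"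
    "int (3 ^ j) - int (3 ^ i) = 3 ^ i * (3 ^ d - 1)"
    using d(3) by (simp_all add: power_add algebra_simps)
  ultimately have "(2::int) ^ (n + 2) dvd 3 ^ d + 1 \<or> (2::int) ^ (n + 2) dvd 3 ^ d - 1"
    using two_cos_eq_imp_dvd[OF eq] by (simp add: coprime_dvd_mult_right_iff)
  then show False
  proof
    assume dvd: "(2::int) ^ (n + 2) dvd 3 ^ d + 1"
    have "(8::int) dvd 2 ^ (n + 2)"
      using n le_imp_power_dvd[of 3 "n + 2" "2::int"] by simp
    then have "((3::int) ^ d + 1) mod 8 = 0"
      using dvd_trans[OF _ dvd] by simp
    moreover have "((3::int) ^ d + 1) mod 8 = (3 ^ d mod 8 + 1) mod 8"
      by (simp add: mod_add_left_eq)
    ultimately show False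
      by (simp add: three_pow_mod_8 split: if_splits)
  next
    assume "(2::int) ^ (n + 2) dvd 3 ^ d - 1"
    then have "2 ^ n dvd d"
      by (rule two_pow_dvd_three_pow_minus_1_imp_dvd)
    then have "2 ^ n \<le> d"
      using d(1) by (rule dvd_imp_le)
    with d(2) show False
      by simp
  qed
qed

lemma inj_on_two_cos_pow3:
  assumes "n \<ge> 1"
  shows "inj_on (\<lambda>j. two_cos n (3 ^ j)) {..<2 ^ n}"
proof (rule inj_onI)
  fix i j
  assume "i \<in> {..<2 ^ n}" "j \<in> {..<2 ^ n}" "two_cos n (3 ^ i) = two_cos n (3 ^ j)"
  then show "i = j"
    using two_cos_pow3_neq[OF assms, of i j] two_cos_pow3_neq[OF assms, of j i]
    by (cases i j rule: linorder_cases) auto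
qed

lemma bij_betw_two_cos_pow3:
  assumes "n \<ge> 1"
  shows "bij_betw (\<lambda>j. two_cos n (3 ^ j)) {..<2 ^ n} (theta_conjs n)"
proof -
  have "(\<lambda>j. two_cos n (3 ^ j)) ` {..<2 ^ n} \<subseteq> theta_conjs n"
    by (auto intro: two_cos_mem_theta_conjs)
  moreover have "card ((\<lambda>j. two_cos n (3 ^ j)) ` {..<2 ^ n}) = card (theta_conjs n)"
    using card_image[OF inj_on_two_cos_pow3[OF assms]] by (simp add: card_theta_conjs)
  ultimately have "(\<lambda>j. two_cos n (3 ^ j)) ` {..<2 ^ n} = theta_conjs n"
    using finite_theta_conjs by (rule card_subset_eq[rotated])
  then show ?thesis
    using inj_on_two_cos_pow3[OF assms] unfolding bij_betw_def by blast
qed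

lemma prod_theta_conjs_eq_prod_pow3:
  "n \<ge> 1 \<Longrightarrow> (\<Prod>r\<in>theta_conjs n. f r) = (\<Prod>j<2 ^ n. f (two_cos n (3 ^ j)))"
  using prod.reindex_bij_betw[OF bij_betw_two_cos_pow3, of n f] by simp

section \<open>The lattices\<close>

text \<open>Dickson polynomials: \<open>dickson i (z + z\<^sup>-\<^sup>1) = z\<^sup>i + z\<^sup>-\<^sup>i\<close>.\<close>

fun dickson :: "nat \<Rightarrow> int poly" where
  "dickson 0 = [:2:]"
| "dickson (Suc 0) = [:0, 1:]"
| "dickson (Suc (Suc i)) = [:0, 1:] * dickson (Suc i) - dickson i"

lemma ipoly_dickson_two_cos: "ipoly (dickson i) (2 * cos x) = 2 * cos (real i * x)"
proof (induction i rule: dickson.induct)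
  case (3 i)
  have "real (Suc (Suc i)) * x = real (Suc i) * x + x" "real i * x = real (Suc i) * x - x"
    by (simp_all add: algebra_simps)
  then have "cos (real (Suc (Suc i)) * x) + cos (real i * x) = 2 * cos x * cos (real (Suc i) * x)"
    by (simp add: cos_add cos_diff)
  with 3 show ?case
    by (simp add: algebra_simps)
qed simp_all

lemma two_cos_mult: "two_cos n (i * a) = ipoly (dickson i) (two_cos n a)"
proof -
  have "two_cos n (i * a) = 2 * cos (real i * (2 * pi * real a / 2 ^ (n + 2)))"
    unfolding two_cos_def by (simp add: algebra_simps)
  then show ?thesis
    unfolding two_cos_def ipoly_dickson_two_cos .
qed

lemma degree_dickson_le: "degree (dickson i) \<le> i"
  and coeff_dickson_self: "coeff (dickson i) i = (if i = 0 then 2 else 1)"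
proof (induction i rule: dickson.induct)
  case (3 i)
  { case 1
    have "degree ([:0, 1:] * dickson (Suc i)) \<le> Suc (Suc i)"
      using 3(1) degree_mult_le[of "[:0, 1::int:]" "dickson (Suc i)"] by simp
    moreover have "degree (dickson i) \<le> Suc (Suc i)"
      using 3(3) by simp
    ultimately show ?case
      unfolding dickson.simps by (intro order_trans[OF degree_diff_le_max]) simp
  next
    case 2
    show ?case
      using 3(2,3) by (simp add: coeff_eq_0)
  }
qed simp_all

lemma coeff_dickson_above: "i < t \<Longrightarrow> coeff (dickson i) t = 0"
  using degree_dickson_le[of i] by (simp add: coeff_eq_0)

lemma even_coeff_dickson_0: "even (coeff (dickson i) 0)"
  by (induction i rule: dickson.induct) auto

lemma mem_coeffs_iff: "c \<in> Defs.coeffs (n + 2) \<longleftrightarrow> (\<forall>i\<ge>2 ^ n. c i = 0)"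
  unfolding Defs.coeffs_def kdim_def by simp

definition OL_poly :: "nat \<Rightarrow> (nat \<Rightarrow> int) \<Rightarrow> int poly" where
  "OL_poly K c = (\<Sum>i<K. monom (c i) i)"

definition L'_poly :: "nat \<Rightarrow> (nat \<Rightarrow> int) \<Rightarrow> int poly" where
  "L'_poly K c = smult (c 0) [:2, 1:] + (\<Sum>i\<in>{1..<K}. smult (c i) (dickson i))"

lemma conj_OL_eq_ipoly: "conj_OL (n + 2) c j = ipoly (OL_poly (2 ^ n) c) (two_cos n (3 ^ j))"
  unfolding conj_OL_def OL_poly_def theta_eq_two_cos by (simp add: ipoly_sum kdim_def)

lemma conj_L'_eq_ipoly: "conj_L' (n + 2) c j = ipoly (L'_poly (2 ^ n) c) (two_cos n (3 ^ j))"
  unfolding conj_L'_def L'_poly_def theta_eq_two_cos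
  by (simp add: ipoly_sum two_cos_mult algebra_simps kdim_def)

lemma coeff_OL_poly: "coeff (OL_poly K c) t = (if t < K then c t else 0)"
  unfolding OL_poly_def by (simp add: coeff_sum)

lemma degree_OL_poly_less:
  assumes "K \<ge> 1"
  shows "degree (OL_poly K c) < K"
proof -
  have "degree (OL_poly K c) \<le> K - 1"
    by (rule degree_le) (auto simp: coeff_OL_poly)
  with assms show ?thesis
    by linarith
qed

lemma OL_poly_nonzero: "\<exists>i<K. c i \<noteq> 0 \<Longrightarrow> OL_poly K c \<noteq> 0"
  using coeff_OL_poly[of K c] by (metis coeff_0)

lemma degree_L'_poly_less:
  assumes "K \<ge> 2"
  shows "degree (L'_poly K c) < K"
proof -
  have "coeff (L'_poly K c) t = 0" if "K - 1 < t" for t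
  proof -
    have "coeff [:2, 1::int:] t = 0"
      using that assms by (simp add: coeff_pCons split: nat.splits)
    moreover have "coeff (dickson i) t = 0" if "i \<in> {1..<K}" for i
    proof -
      have "i < t"
        using that \<open>K - 1 < t\<close> by auto
      then show ?thesis
        by (rule coeff_dickson_above)
    qed
    ultimately show ?thesis
      unfolding L'_poly_def coeff_add coeff_smult coeff_sum by simp
  qed
  then have "degree (L'_poly K c) \<le> K - 1"
    by (intro degree_le) auto
  with assms show ?thesis
    by linarith
qed

lemma even_coeff_L'_poly_0: "even (coeff (L'_poly K c) 0)"
  unfolding L'_poly_def by (auto simp: coeff_sum even_coeff_dickson_0 intro!: dvd_sum)

text \<open>The matrix of \<open>c \<mapsto> L'_poly K c\<close> in the monomial basis is triangular (\<open>dickson i\<close> has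
  degree \<open>i\<close> and leading coefficient 1 for \<open>i \<ge> 1\<close>).\<close>

lemma L'_poly_eq_0_imp:
  "K \<ge> 2 \<Longrightarrow> L'_poly K c = 0 \<Longrightarrow> i < K \<Longrightarrow> c i = 0"
proof (induction K arbitrary: i rule: dec_induct)
  case base
  have "L'_poly 2 c = [:2 * c 0, c 0 + c 1:]"
    unfolding L'_poly_def by (simp add: algebra_simps numeral_2_eq_2)
  with base.prems show ?case
    by (auto simp: less_2_cases_iff)
next
  case (step K)
  have L': "L'_poly (Suc K) c = L'_poly K c + smult (c K) (dickson K)"
    unfolding L'_poly_def using step.hyps by simp
  have "coeff (L'_poly K c) K = 0"
    using degree_L'_poly_less[OF step.hyps(1)] by (simp add: coeff_eq_0)
  then have "c K = 0"
    using arg_cong[OF step.prems(1), of "\<lambda>p. coeff p K"] step.hyps(1)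
    by (simp add: L' coeff_dickson_self)
  with step show ?case
    using L' by (cases "i = K") auto
qed

lemma two_cos_pow3_less_2: "two_cos n (3 ^ j) < 2"
proof -
  have "ipoly (theta_minpoly n) (2 :: real) = 2"
    using ipoly_of_int[of "theta_minpoly n" 2] poly_theta_minpoly_2[of n] by simp
  moreover have "ipoly (theta_minpoly n) (two_cos n (3 ^ j)) = 0"
    by (simp add: theta_minpoly_root two_cos_mem_theta_conjs)
  ultimately have "two_cos n (3 ^ j) \<noteq> 2"
    by auto
  then show ?thesis
    using abs_two_cos_le[of n "3 ^ j"] by linarith
qed

lemma conj_beta_eq: "conj_beta (n + 2) j = (2 - two_cos n (3 ^ j)) / 2 ^ (n + 1)"
  unfolding conj_beta_def kdim_def theta_eq_two_cos by (simp add: field_simps)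

lemma conj_beta_pos: "conj_beta (n + 2) j > 0"
  unfolding conj_beta_eq using two_cos_pow3_less_2[of n j] by simp

lemma prod_conj_beta:
  assumes "n \<ge> 1"
  shows "(\<Prod>j<2 ^ n. conj_beta (n + 2) j) = 2 / 2 ^ ((n + 1) * 2 ^ n)"
proof -
  have "(\<Prod>j<2 ^ n. 2 - two_cos n (3 ^ j)) = (\<Prod>r\<in>theta_conjs n. 2 - r)"
    by (rule prod_theta_conjs_eq_prod_pow3[OF assms, of "\<lambda>r. 2 - r", symmetric])
  also have "\<dots> = ipoly (theta_minpoly n) 2"
    by (simp add: ipoly_theta_minpoly)
  also have "\<dots> = 2"
    using ipoly_of_int[of "theta_minpoly n" 2] poly_theta_minpoly_2[of n] by simp
  finally show ?thesis
    unfolding conj_beta_eq prod_dividef by (simp add: power_mult[symmetric] mult.commute power_add)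
qed

lemma prod_real_sqrt: "(\<Prod>j\<in>A. sqrt (f j)) = sqrt (\<Prod>j\<in>A. f j)"
  by (induction A rule: infinite_finite_induct) (simp_all add: real_sqrt_mult)

lemma prod_phi_beta:
  assumes "n \<ge> 1"
  shows "(\<Prod>j<2 ^ n. phi_beta (n + 2) y j) = sqrt (2 / 2 ^ ((n + 1) * 2 ^ n)) * (\<Prod>j<2 ^ n. y j)"
proof -
  have "(\<Prod>j<2 ^ n. phi_beta (n + 2) y j) = (\<Prod>j<2 ^ n. sqrt (conj_beta (n + 2) j) * y j)"
    unfolding phi_beta_def kdim_def by simp
  also have "\<dots> = sqrt (\<Prod>j<2 ^ n. conj_beta (n + 2) j) * (\<Prod>j<2 ^ n. y j)"
    by (simp add: prod.distrib prod_real_sqrt)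
  finally show ?thesis
    unfolding prod_conj_beta[OF assms] .
qed

lemma phi_beta_nonzero: "j < 2 ^ n \<Longrightarrow> y j \<noteq> 0 \<Longrightarrow> phi_beta (n + 2) y j \<noteq> 0"
  unfolding phi_beta_def kdim_def using conj_beta_pos[of n j] by simp

lemma phi_beta_nonzero_imp:
  fixes conjs :: "(nat \<Rightarrow> int) \<Rightarrow> nat \<Rightarrow> real"
  assumes "\<And>j. conjs (\<lambda>_. 0) j = 0" and "phi_beta (n + 2) (conjs c) \<noteq> (\<lambda>_. 0)"
  shows "c \<noteq> (\<lambda>_. 0)"
proof
  assume "c = (\<lambda>_. 0)"
  then have "phi_beta (n + 2) (conjs c) = (\<lambda>_. 0)"
    unfolding phi_beta_def \<open>c = _\<close> assms(1) by (simp add: fun_eq_iff)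
  with assms(2) show False ..
qed

lemma max_diversity_phi_beta_image:
  fixes conjs :: "(nat \<Rightarrow> int) \<Rightarrow> nat \<Rightarrow> real"
  assumes conj_0: "\<And>j. conjs (\<lambda>_. 0) j = 0"
    and conj_nonzero: "\<And>c j. c \<in> Defs.coeffs (n + 2) \<Longrightarrow> c \<noteq> (\<lambda>_. 0) \<Longrightarrow> j < 2 ^ n \<Longrightarrow> conjs c j \<noteq> 0"
  shows "max_diversity (kdim (n + 2)) ((\<lambda>c. phi_beta (n + 2) (conjs c)) ` Defs.coeffs (n + 2))"
  unfolding max_diversity_def kdim_def
proof (intro ballI impI allI)
  fix y and j :: nat
  assume "y \<in> (\<lambda>c. phi_beta (n + 2) (conjs c)) ` Defs.coeffs (n + 2)" "y \<noteq> (\<lambda>_. 0)"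
    "j < 2 ^ (n + 2 - 2)"
  then obtain c where "c \<in> Defs.coeffs (n + 2)" "y = phi_beta (n + 2) (conjs c)" "j < 2 ^ n"
    by auto
  with \<open>y \<noteq> _\<close> show "y j \<noteq> 0"
    using phi_beta_nonzero conj_nonzero phi_beta_nonzero_imp[where conjs = conjs, OF conj_0] by blast
qed

lemma dpmin_phi_beta_image:
  fixes n :: nat and conjs :: "(nat \<Rightarrow> int) \<Rightarrow> nat \<Rightarrow> real"
  defines "\<Lambda> \<equiv> (\<lambda>c. phi_beta (n + 2) (conjs c)) ` Defs.coeffs (n + 2)"
  assumes n: "n \<ge> 1" and conj_0: "\<And>j. conjs (\<lambda>_. 0) j = 0"
    and lower: "\<And>c. c \<in> Defs.coeffs (n + 2) \<Longrightarrow> c \<noteq> (\<lambda>_. 0) \<Longrightarrow> \<bar>\<Prod>j<2 ^ n. conjs c j\<bar> \<ge> L"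
    and attained: "c\<^sub>0 \<in> Defs.coeffs (n + 2)" "conjs c\<^sub>0 0 \<noteq> 0" "\<bar>\<Prod>j<2 ^ n. conjs c\<^sub>0 j\<bar> = L"
  shows "dpmin (kdim (n + 2)) \<Lambda> = sqrt (2 / 2 ^ ((n + 1) * 2 ^ n)) * L"
proof -
  define s where "s = sqrt (2 / 2 ^ ((n + 1) * 2 ^ n) :: real)"
  have abs_prod: "\<bar>\<Prod>j<2 ^ n. phi_beta (n + 2) (conjs c) j\<bar> = s * \<bar>\<Prod>j<2 ^ n. conjs c j\<bar>" for c
    unfolding prod_phi_beta[OF n] s_def by (simp add: abs_mult)
  define D where "D = {\<bar>\<Prod>j<2 ^ n. y j\<bar> | y. y \<in> \<Lambda> \<and> y \<noteq> (\<lambda>_. 0)}"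
  have "phi_beta (n + 2) (conjs c\<^sub>0) 0 \<noteq> 0"
    using phi_beta_nonzero attained(2) by simp
  then have "phi_beta (n + 2) (conjs c\<^sub>0) \<noteq> (\<lambda>_. 0)"
    by metis
  moreover have "phi_beta (n + 2) (conjs c\<^sub>0) \<in> \<Lambda>"
    unfolding \<Lambda>_def using attained(1) by (rule imageI)
  ultimately have "s * L \<in> D"
    unfolding D_def using attained(3) abs_prod[of c\<^sub>0]
    by (intro CollectI exI[of _ "phi_beta (n + 2) (conjs c\<^sub>0)"]) simp
  moreover have "s * L \<le> x" if "x \<in> D" for x
  proof -
    obtain c where c: "c \<in> Defs.coeffs (n + 2)" "phi_beta (n + 2) (conjs c) \<noteq> (\<lambda>_. 0)"
      and x: "x = \<bar>\<Prod>j<2 ^ n. phi_beta (n + 2) (conjs c) j\<bar>"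
      using \<open>x \<in> D\<close> unfolding D_def \<Lambda>_def by blast
    have "s > 0"
      unfolding s_def by simp
    then show ?thesis
      unfolding x abs_prod using lower[OF c(1) phi_beta_nonzero_imp[where conjs = conjs, OF conj_0 c(2)]] by simp
  qed
  ultimately have "Inf D = s * L"
    by (rule cInf_eq_minimum)
  then show ?thesis
    unfolding dpmin_def kdim_def D_def s_def by simp
qed

lemma max_diversity_dpmin_lattice_OL:
  assumes n: "n \<ge> 1"
  shows "max_diversity (kdim (n + 2)) (lattice_OL (n + 2))"
    and "dpmin (kdim (n + 2)) (lattice_OL (n + 2)) = sqrt (2 / 2 ^ ((n + 1) * 2 ^ n))"
proof -
  define one :: "nat \<Rightarrow> int" where "one = (\<lambda>i. if i = 0 then 1 else 0)"
  have one: "one \<in> Defs.coeffs (n + 2)" "one \<noteq> (\<lambda>_. 0)"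
    unfolding mem_coeffs_iff one_def by (auto dest: fun_cong[of _ _ 0])
  have "conj_OL (n + 2) one j = (\<Sum>i<(2::nat) ^ n. if i = 0 then 1 else 0)" for j
    unfolding conj_OL_def one_def kdim_def by (rule sum.cong) auto
  then have attained: "\<bar>\<Prod>j<2 ^ n. conj_OL (n + 2) one j\<bar> = 1"
    by simp
  have support: "\<exists>i<2 ^ n. c i \<noteq> 0" if "c \<in> Defs.coeffs (n + 2)" "c \<noteq> (\<lambda>_. 0)" for c
    using that unfolding mem_coeffs_iff by (meson ext not_le)
  have OL_poly: "OL_poly (2 ^ n) c \<noteq> 0" "degree (OL_poly (2 ^ n) c) < 2 ^ n"
    if "c \<in> Defs.coeffs (n + 2)" "c \<noteq> (\<lambda>_. 0)" for c
    using OL_poly_nonzero[OF support[OF that]] degree_OL_poly_less[of "2 ^ n" c] by simp_all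
  have "conj_OL (n + 2) c j \<noteq> 0"
    if "c \<in> Defs.coeffs (n + 2)" "c \<noteq> (\<lambda>_. 0)" "j < 2 ^ n" for c j
    unfolding conj_OL_eq_ipoly
    by (intro ipoly_nonzero_at_theta_conj[OF n] OL_poly[OF that(1,2)] two_cos_mem_theta_conjs) simp
  moreover have "\<bar>\<Prod>j<2 ^ n. conj_OL (n + 2) c j\<bar> \<ge> 1"
    if "c \<in> Defs.coeffs (n + 2)" "c \<noteq> (\<lambda>_. 0)" for c
    using abs_theta_norm_ge_1[OF n OL_poly[OF that]]
    unfolding theta_norm_def prod_theta_conjs_eq_prod_pow3[OF n] conj_OL_eq_ipoly .
  moreover have "conj_OL (n + 2) (\<lambda>_. 0) j = 0" for j
    unfolding conj_OL_def by simp
  ultimately show "max_diversity (kdim (n + 2)) (lattice_OL (n + 2))"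
    and "dpmin (kdim (n + 2)) (lattice_OL (n + 2)) = sqrt (2 / 2 ^ ((n + 1) * 2 ^ n))"
    unfolding lattice_OL_def
    using max_diversity_phi_beta_image[where conjs = "conj_OL (n + 2)"]
      dpmin_phi_beta_image[where conjs = "conj_OL (n + 2)", OF n _ _ one(1) _ attained] one
    by auto
qed

lemma max_diversity_dpmin_lattice_L':
  assumes n: "n \<ge> 1"
  shows "max_diversity (kdim (n + 2)) (lattice_L' (n + 2))"
    and "dpmin (kdim (n + 2)) (lattice_L' (n + 2)) = sqrt (2 / 2 ^ ((n + 1) * 2 ^ n)) * 2"
proof -
  have K: "(2::nat) \<le> 2 ^ n"
    using n by (simp add: self_le_power)
  define theta1 :: "nat \<Rightarrow> int" where "theta1 = (\<lambda>i. if i = 1 then 1 else 0)"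
  have theta1: "theta1 \<in> Defs.coeffs (n + 2)" "theta1 \<noteq> (\<lambda>_. 0)"
    unfolding mem_coeffs_iff theta1_def using K by (auto dest: fun_cong[of _ _ 1])
  have "(\<Sum>i\<in>{1..<2 ^ n}. smult (theta1 i) (dickson i)) = (\<Sum>i\<in>{1..<2 ^ n}. if i = 1 then dickson i else 0)"
    by (rule sum.cong) (simp_all add: theta1_def)
  then have "L'_poly (2 ^ n) theta1 = [:0, 1:]"
    using K unfolding L'_poly_def by (simp add: theta1_def)
  then have "(\<Prod>j<2 ^ n. conj_L' (n + 2) theta1 j) = (\<Prod>r\<in>theta_conjs n. r)"
    unfolding conj_L'_eq_ipoly prod_theta_conjs_eq_prod_pow3[OF n] by simp
  then have attained: "\<bar>\<Prod>j<2 ^ n. conj_L' (n + 2) theta1 j\<bar> = 2"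
    using abs_prod_theta_conjs[OF n] by simp
  have L'_poly: "L'_poly (2 ^ n) c \<noteq> 0" "degree (L'_poly (2 ^ n) c) < 2 ^ n"
    if "c \<in> Defs.coeffs (n + 2)" "c \<noteq> (\<lambda>_. 0)" for c
  proof -
    show "L'_poly (2 ^ n) c \<noteq> 0"
      using that L'_poly_eq_0_imp[OF K] unfolding mem_coeffs_iff by (meson ext not_le)
    show "degree (L'_poly (2 ^ n) c) < 2 ^ n"
      by (rule degree_L'_poly_less[OF K])
  qed
  have "conj_L' (n + 2) c j \<noteq> 0"
    if "c \<in> Defs.coeffs (n + 2)" "c \<noteq> (\<lambda>_. 0)" "j < 2 ^ n" for c j
    unfolding conj_L'_eq_ipoly
    by (intro ipoly_nonzero_at_theta_conj[OF n] L'_poly[OF that(1,2)] two_cos_mem_theta_conjs) simp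
  moreover have "\<bar>\<Prod>j<2 ^ n. conj_L' (n + 2) c j\<bar> \<ge> 2"
    if "c \<in> Defs.coeffs (n + 2)" "c \<noteq> (\<lambda>_. 0)" for c
    using abs_theta_norm_ge_2[OF n L'_poly[OF that] even_coeff_L'_poly_0]
    unfolding theta_norm_def prod_theta_conjs_eq_prod_pow3[OF n] conj_L'_eq_ipoly .
  moreover have "conj_L' (n + 2) (\<lambda>_. 0) j = 0" for j
    unfolding conj_L'_def by simp
  ultimately show "max_diversity (kdim (n + 2)) (lattice_L' (n + 2))"
    and "dpmin (kdim (n + 2)) (lattice_L' (n + 2)) = sqrt (2 / 2 ^ ((n + 1) * 2 ^ n)) * 2"
    unfolding lattice_L'_def
    using max_diversity_phi_beta_image[where conjs = "conj_L' (n + 2)"]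
      dpmin_phi_beta_image[where conjs = "conj_L' (n + 2)", OF n _ _ theta1(1) _ attained] theta1
    by auto
qed

lemma sqrt_norm_beta_eq_powr:
  "sqrt (2 / 2 ^ ((n + 1) * 2 ^ n)) = 2 powr ((1 - (real (n + 2) - 1) * real (kdim (n + 2))) / 2)"
proof -
  have "2 / 2 ^ ((n + 1) * 2 ^ n) = (2::real) powr (1 - (real (n + 2) - 1) * real (kdim (n + 2)))"
    unfolding kdim_def by (simp add: powr_diff powr_realpow[symmetric] algebra_simps)
  then show ?thesis
    by (simp add: powr_half_sqrt_powr)
qed

theorem mainTheorem12:
  fixes m :: nat
  assumes "m \<ge> 3"
  shows "max_diversity (kdim m) (lattice_OL m)
       \<and> max_diversity (kdim m) (lattice_L' m)
       \<and> dpmin (kdim m) (lattice_OL m) = 2 powr ((1 - (real m - 1) * real (kdim m)) / 2)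
       \<and> dpmin (kdim m) (lattice_L' m) = 2 powr ((3 - (real m - 1) * real (kdim m)) / 2)"
proof -
  define n where "n = m - 2"
  have n: "n \<ge> 1" and m: "m = n + 2"
    using assms unfolding n_def by simp_all
  have exponent: "(3 - (real m - 1) * real (kdim m)) / 2 = 1 + (1 - (real m - 1) * real (kdim m)) / 2"
    by (simp add: field_simps)
  have "2 powr ((3 - (real m - 1) * real (kdim m)) / 2)
      = 2 * 2 powr ((1 - (real m - 1) * real (kdim m)) / 2)"
    unfolding exponent powr_add by simp
  then show ?thesis
    using max_diversity_dpmin_lattice_OL[OF n] max_diversity_dpmin_lattice_L'[OF n]
      sqrt_norm_beta_eq_powr[of n]
    unfolding m by (simp add: mult.commute)
qed

end
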